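(* Let $G$ be a well-covered graph. Then every maximal induced bipartite subgraph of $G$ has the same weight, where the weight of a subgraph is twice its number of isolated vertices plus its number of non-isolated vertices.
   Context: All graphs are finite and simple; "subgraph" means induced subgraph, and a maximal bipartite subgraph is one maximal with respect to vertex inclusion among induced bipartite subgraphs. A graph is well-covered if every maximal independent set has the same cardinality. *)

theory Defs
  imports Main
begin

definition simple_graph :: "'a set \<Rightarrow> ('a \<Rightarrow> 'a \<Rightarrow> bool) \<Rightarrow> bool" where
  "simple_graph V E \<longleftrightarrow> finite V \<and> (\<forall>x y. E x y \<longrightarrow> E y x) \<and> (\<forall>x. \<not> E x x)
     \<and> (\<forall>x y. E x y \<longrightarrow> x \<in> V \<and> y \<in> V)"

definition independent_set :: "'a set \<Rightarrow> ('a \<Rightarrow> 'a \<Rightarrow> bool) \<Rightarrow> 'a set \<Rightarrow> bool" where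
  "independent_set V E I \<longleftrightarrow> I \<subseteq> V \<and> (\<forall>x\<in>I. \<forall>y\<in>I. \<not> E x y)"

definition maximal_independent_set :: "'a set \<Rightarrow> ('a \<Rightarrow> 'a \<Rightarrow> bool) \<Rightarrow> 'a set \<Rightarrow> bool" where
  "maximal_independent_set V E I \<longleftrightarrow> independent_set V E I \<and>
     (\<forall>J. independent_set V E J \<and> I \<subseteq> J \<longrightarrow> J = I)"

definition well_covered :: "'a set \<Rightarrow> ('a \<Rightarrow> 'a \<Rightarrow> bool) \<Rightarrow> bool" where
  "well_covered V E \<longleftrightarrow> (\<forall>I J. maximal_independent_set V E I \<and> maximal_independent_set V E J
     \<longrightarrow> card I = card J)"

definition induced_bipartite :: "'a set \<Rightarrow> ('a \<Rightarrow> 'a \<Rightarrow> bool) \<Rightarrow> 'a set \<Rightarrow> bool" where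
  "induced_bipartite V E S \<longleftrightarrow> S \<subseteq> V \<and>
     (\<exists>A B. A \<union> B = S \<and> A \<inter> B = {} \<and> independent_set V E A \<and> independent_set V E B)"

definition maximal_induced_bipartite :: "'a set \<Rightarrow> ('a \<Rightarrow> 'a \<Rightarrow> bool) \<Rightarrow> 'a set \<Rightarrow> bool" where
  "maximal_induced_bipartite V E S \<longleftrightarrow> induced_bipartite V E S \<and>
     (\<forall>T. induced_bipartite V E T \<and> S \<subseteq> T \<longrightarrow> T = S)"

definition isolated_in :: "('a \<Rightarrow> 'a \<Rightarrow> bool) \<Rightarrow> 'a set \<Rightarrow> 'a set" where
  "isolated_in E S = {x \<in> S. \<forall>y\<in>S. \<not> E x y}"

definition bip_weight :: "('a \<Rightarrow> 'a \<Rightarrow> bool) \<Rightarrow> 'a set \<Rightarrow> nat" where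
  "bip_weight E S = 2 * card (isolated_in E S) + card (S - isolated_in E S)"

end

theory Submission
  imports Defs
begin

text \<open>Split a maximal induced bipartite subgraph S into its isolated vertices I and
  two sides A, B. Each of A \<union> I and B \<union> I is a maximal independent set of the whole
  graph: a vertex outside S without a neighbour in A \<union> I could be added to that side,
  contradicting maximality of S. Since the weight of S is card (A \<union> I) + card (B \<union> I),
  in a well-covered graph it equals twice the common size of maximal independent sets.\<close>

lemma maximal_independent_setI:
  assumes "independent_set V E A"
    and "\<And>v. v \<in> V \<Longrightarrow> v \<notin> A \<Longrightarrow> \<exists>a\<in>A. E v a"
  shows "maximal_independent_set V E A"
  using assms unfolding maximal_independent_set_def independent_set_def by blast

lemma bip_weight_split:
  assumes "finite S" "A \<union> B = S" "A \<inter> B = {}"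
  shows "bip_weight E S = card (A \<union> isolated_in E S) + card (B \<union> isolated_in E S)"
proof -
  let ?I = "isolated_in E S"
  have fin: "finite A" "finite B" "finite ?I"
    using assms unfolding isolated_in_def by auto
  have "card ((A - ?I) \<union> ?I) = card (A - ?I) + card ?I"
    and "card ((B - ?I) \<union> ?I) = card (B - ?I) + card ?I"
    by (rule card_Un_disjoint; use fin in auto)+
  then have "card (A \<union> ?I) = card (A - ?I) + card ?I"
    and "card (B \<union> ?I) = card (B - ?I) + card ?I"
    by simp_all
  moreover have "S - ?I = (A - ?I) \<union> (B - ?I)" "(A - ?I) \<inter> (B - ?I) = {}"
    using assms by auto
  then have "card (S - ?I) = card (A - ?I) + card (B - ?I)"
    using fin by (simp add: card_Un_disjoint)
  ultimately show ?thesis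
    unfolding bip_weight_def by simp
qed

lemma maximal_independent_side_union_isolated:
  assumes G: "simple_graph V E" and S: "maximal_induced_bipartite V E S"
    and AB: "A \<union> B = S" "A \<inter> B = {}" "independent_set V E A" "independent_set V E B"
  shows "maximal_independent_set V E (A \<union> isolated_in E S)"
proof (rule maximal_independent_setI)
  let ?I = "isolated_in E S"
  have sym: "\<And>x y. E x y \<Longrightarrow> E y x" and irrefl: "\<And>x. \<not> E x x"
    using G unfolding simple_graph_def by blast+
  have SV: "S \<subseteq> V"
    using S unfolding maximal_induced_bipartite_def induced_bipartite_def by blast
  show ind: "independent_set V E (A \<union> ?I)"
    using AB SV sym unfolding independent_set_def isolated_in_def by blast
  fix v assume v: "v \<in> V" "v \<notin> A \<union> ?I"
  show "\<exists>a\<in>A \<union> ?I. E v a"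
  proof (cases "v \<in> S")
    case True
    then obtain y where y: "y \<in> S" "E v y"
      using v unfolding isolated_in_def by blast
    have "v \<in> B"
      using True v AB(1) by blast
    then have "y \<notin> B"
      using y AB(4) unfolding independent_set_def by blast
    then show ?thesis
      using y AB(1) by blast
  next
    case False
    show ?thesis
    proof (rule ccontr)
      assume no_neighbour: "\<not> (\<exists>a\<in>A \<union> ?I. E v a)"
      have "induced_bipartite V E (insert v S)"
        unfolding induced_bipartite_def
      proof (intro conjI exI)
        show "insert v S \<subseteq> V"
          using SV v by blast
        show "insert v (A \<union> ?I) \<union> (B - ?I) = insert v S"
          using AB(1) unfolding isolated_in_def by blast
        show "insert v (A \<union> ?I) \<inter> (B - ?I) = {}"
          using AB(1,2) False by blast
        show "independent_set V E (insert v (A \<union> ?I))"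
          using ind v(1) no_neighbour sym irrefl unfolding independent_set_def by blast
        show "independent_set V E (B - ?I)"
          using AB(4) unfolding independent_set_def by blast
      qed
      then have "insert v S = S"
        using S unfolding maximal_induced_bipartite_def by blast
      with False show False by blast
    qed
  qed
qed

lemma maximal_induced_bipartite_weight_split:
  assumes G: "simple_graph V E" and S: "maximal_induced_bipartite V E S"
  obtains M N where "maximal_independent_set V E M" "maximal_independent_set V E N"
    "bip_weight E S = card M + card N"
proof -
  obtain A B where AB: "A \<union> B = S" "A \<inter> B = {}"
    "independent_set V E A" "independent_set V E B"
    using S unfolding maximal_induced_bipartite_def induced_bipartite_def by blast
  have "S \<subseteq> V" "finite V"
    using G S unfolding simple_graph_def maximal_induced_bipartite_def induced_bipartite_def
    by simp_all
  then have "finite S"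
    by (rule finite_subset)
  have "B \<union> A = S" "B \<inter> A = {}"
    using AB by blast+
  show thesis
  proof (rule that)
    show "maximal_independent_set V E (A \<union> isolated_in E S)"
      using maximal_independent_side_union_isolated[OF G S AB] .
    show "maximal_independent_set V E (B \<union> isolated_in E S)"
      using maximal_independent_side_union_isolated[OF G S \<open>B \<union> A = S\<close> \<open>B \<inter> A = {}\<close> AB(4,3)] .
    show "bip_weight E S = card (A \<union> isolated_in E S) + card (B \<union> isolated_in E S)"
      using bip_weight_split[OF \<open>finite S\<close> AB(1,2)] .
  qed
qed

lemma well_covered_bip_weight:
  assumes "simple_graph V E" "well_covered V E"
    and "maximal_induced_bipartite V E S" "maximal_independent_set V E M"
  shows "bip_weight E S = 2 * card M"
proof -
  obtain N N' where "maximal_independent_set V E N" "maximal_independent_set V E N'"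
    "bip_weight E S = card N + card N'"
    using maximal_induced_bipartite_weight_split[OF assms(1,3)] .
  moreover have "card N = card M" "card N' = card M"
    using calculation(1,2) assms(2,4) unfolding well_covered_def by blast+
  ultimately show ?thesis
    by simp
qed

theorem mainTheorem6:
  fixes V :: "'a set" and E :: "'a \<Rightarrow> 'a \<Rightarrow> bool"
  assumes "simple_graph V E"
    and "well_covered V E"
    and "maximal_induced_bipartite V E S"
    and "maximal_induced_bipartite V E T"
  shows "bip_weight E S = bip_weight E T"
proof -
  obtain M where M: "maximal_independent_set V E M"
    using maximal_induced_bipartite_weight_split[OF assms(1,3)] by blast
  show ?thesis
    using well_covered_bip_weight[OF assms(1,2) _ M] assms(3,4) by simp
qed

end
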